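(* Let $k,m\in\mathbb{N}$ with $k>m$, $k$ even, $\frac{2k+1}{4m}<1$ and $\gcd(4m,2k+1)=1$. For $s=0,\dots,4m-1$ and $n=0,\dots,2k$ put $\widetilde X_{sn}=\frac{s}{4m}-\frac{n}{2k+1}$ and $\widetilde\Phi_{sn}(0,0)=\sum_{l\in\mathbb{Z}}Q_2\big(2(l+\widetilde X_{sn})\big)$ with $Q_2(x)=(1-|x|)\chi_{[-1,1]}(x)$. Let $\widetilde A$ be the $(2m-1)\times k$ matrix with entries $\widetilde A_{sn}=\widetilde\Phi_{sn}(0,0)-\widetilde\Phi_{s,2k+1-n}(0,0)$, $s=1,\dots,2m-1$, $n=1,\dots,k$. Then $\operatorname{rank}(\widetilde A)\le k-1$.
   Context: This corresponds to the Gabor system of $Q_2$ with $a=\frac{1}{2m}$, $b=\frac{2k+1}{2}$, $ab=\frac{2k+1}{4m}$. *)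

theory Defs
  imports "HOL-Analysis.Analysis" "Jordan_Normal_Form.DL_Rank"
begin

definition Q2 :: "real \<Rightarrow> real" where
  "Q2 x = (if \<bar>x\<bar> \<le> 1 then 1 - \<bar>x\<bar> else 0)"

definition Xt :: "nat \<Rightarrow> nat \<Rightarrow> nat \<Rightarrow> int \<Rightarrow> real" where
  "Xt m k s n = real s / (4 * real m) - real_of_int n / (2 * real k + 1)"

definition Phit :: "nat \<Rightarrow> nat \<Rightarrow> nat \<Rightarrow> int \<Rightarrow> real" where
  "Phit m k s n = (\<Sum>\<^sub>\<infinity>l::int. Q2 (2 * (real_of_int l + Xt m k s n)))"

definition At :: "nat \<Rightarrow> nat \<Rightarrow> real mat" where
  "At m k = mat (2 * m - 1) k
     (\<lambda>(i, j). Phit m k (i + 1) (int (j + 1)) - Phit m k (i + 1) (2 * int k + 1 - int (j + 1)))"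

end

theory Submission
  imports Defs
begin

(* Let T x = Q2_periodized x, the sum over l of Q2 (2 (l + x)), so that Phi~_{sn}(0,0) = T (X~_{sn}).
   The hat functions Q2 (j + y), j an integer, form a partition of unity; splitting j into
   even and odd values gives T x + T (x + 1/2) = 1, and T is even.  Since
   X~_{2m-s,n} = -(X~_{s,2k+1-n} + 1/2), this yields Phi~_{2m-s,n} = 1 - Phi~_{s,2k+1-n}, so
   rows s and 2m - s of A~ coincide.  Hence A~ has at most m distinct rows and rank at most
   m <= k - 1; of the hypotheses only k > m is needed. *)

lemma (in vec_space) rank_le_sum_products:
  fixes f g :: "nat \<Rightarrow> nat \<Rightarrow> 'a"
  shows "rank (mat n nc (\<lambda>(r, c). \<Sum>t<q. f t r * g t c)) \<le> q"
proof (induction q)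
  case 0
  have "mat n nc (\<lambda>(r, c). \<Sum>t<0. f t r * g t c) = 0\<^sub>m n nc"
    by (rule eq_matI) auto
  then show ?case
    by (simp only: rank_0I order_refl)
next
  case (Suc q)
  have split: "mat n nc (\<lambda>(r, c). \<Sum>t<Suc q. f t r * g t c) =
      mat n nc (\<lambda>(r, c). \<Sum>t<q. f t r * g t c) + mat n nc (\<lambda>(r, c). f q r * g q c)"
    by (rule eq_matI) auto
  have "rank (mat n nc (\<lambda>(r, c). f q r * g q c)) \<le> 1"
    by (rule rank_le_1_product_entries[of _ nc "f q" "g q"]) auto
  moreover have "rank (mat n nc (\<lambda>(r, c). \<Sum>t<Suc q. f t r * g t c)) \<le>
      rank (mat n nc (\<lambda>(r, c). \<Sum>t<q. f t r * g t c)) + rank (mat n nc (\<lambda>(r, c). f q r * g q c))"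
    unfolding split by (rule rank_subadditive) auto
  ultimately show ?case
    using Suc by linarith
qed

lemma (in vec_space) rank_le_of_row_factor:
  assumes "A \<in> carrier_mat n nc"
    and "\<And>r. r < n \<Longrightarrow> p r < q"
    and "\<And>r c. r < n \<Longrightarrow> c < nc \<Longrightarrow> A $$ (r, c) = B (p r) c"
  shows "rank A \<le> q"
proof -
  have A_eq: "A = mat n nc (\<lambda>(r, c). \<Sum>t<q. of_bool (t = p r) * B t c)"
  proof (rule eq_matI)
    fix i j
    assume "i < dim_row (mat n nc (\<lambda>(r, c). \<Sum>t<q. of_bool (t = p r) * B t c))"
      and "j < dim_col (mat n nc (\<lambda>(r, c). \<Sum>t<q. of_bool (t = p r) * B t c))"
    then have "i < n" "j < nc" by auto
    moreover have "{..<q} \<inter> {t. t = p i} = {p i}"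
      using assms(2)[OF \<open>i < n\<close>] by auto
    ultimately show "A $$ (i, j) = mat n nc (\<lambda>(r, c). \<Sum>t<q. of_bool (t = p r) * B t c) $$ (i, j)"
      using assms(3) by simp
  qed (use assms(1) in auto)
  show ?thesis
    unfolding A_eq by (rule rank_le_sum_products)
qed

lemma Q2_minus: "Q2 (- x) = Q2 x"
  unfolding Q2_def by simp

lemma Q2_partition_of_unity: "((\<lambda>j::int. Q2 (of_int j + y)) has_sum 1) UNIV"
proof (rule has_sum_finite_neutralI)
  let ?f = "\<lfloor>y\<rfloor>"
  show "finite {- ?f, - ?f - 1}" by simp
  show "Q2 (of_int j + y) = 0" if "j \<in> UNIV - {- ?f, - ?f - 1}" for j
  proof -
    have "j + ?f \<ge> 1 \<or> j + ?f \<le> -2"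
      using that by auto
    then have "of_int j + y \<ge> 1 \<or> of_int j + y \<le> -1"
      by linarith
    then show ?thesis
      unfolding Q2_def by auto
  qed
  show "1 = (\<Sum>j\<in>{- ?f, - ?f - 1}. Q2 (of_int j + y))"
    unfolding Q2_def by simp linarith
qed auto

definition Q2_periodized :: "real \<Rightarrow> real" where
  "Q2_periodized x = (\<Sum>\<^sub>\<infinity>l::int. Q2 (2 * (of_int l + x)))"

lemma Phit_eq_Q2_periodized: "Phit m k s n = Q2_periodized (Xt m k s n)"
  unfolding Phit_def Q2_periodized_def ..

lemma Q2_periodized_minus: "Q2_periodized (- x) = Q2_periodized x"
proof -
  have "Q2_periodized x = (\<Sum>\<^sub>\<infinity>l\<in>range uminus. Q2 (2 * (of_int l + x)))"
    by (simp add: Q2_periodized_def surj_def)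
  also have "\<dots> = (\<Sum>\<^sub>\<infinity>l::int. Q2 (2 * (of_int (- l) + x)))"
    using infsum_reindex[of "uminus :: int \<Rightarrow> int" UNIV "\<lambda>l. Q2 (2 * (of_int l + x))"]
    by (simp add: comp_def)
  also have "\<dots> = Q2_periodized (- x)"
    unfolding Q2_periodized_def
  proof (rule infsum_cong)
    fix l :: int
    have "2 * (of_int (- l) + x) = - (2 * (of_int l + - x))"
      by simp
    then show "Q2 (2 * (of_int (- l) + x)) = Q2 (2 * (of_int l + - x))"
      by (simp only: Q2_minus)
  qed
  finally show ?thesis ..
qed

lemma Q2_periodized_shift_half:
  "Q2_periodized (x + of_int r / 2) = (\<Sum>\<^sub>\<infinity>j\<in>range (\<lambda>l. 2 * l + r). Q2 (of_int j + 2 * x))"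
proof -
  have "inj (\<lambda>l::int. 2 * l + r)"
    by (simp add: inj_def)
  then have "(\<Sum>\<^sub>\<infinity>j\<in>range (\<lambda>l. 2 * l + r). Q2 (of_int j + 2 * x)) =
      (\<Sum>\<^sub>\<infinity>l::int. Q2 (of_int (2 * l + r) + 2 * x))"
    by (simp add: infsum_reindex comp_def)
  also have "\<dots> = Q2_periodized (x + of_int r / 2)"
    unfolding Q2_periodized_def
  proof (rule infsum_cong)
    fix l :: int
    have "of_int (2 * l + r) + 2 * x = 2 * (of_int l + (x + of_int r / 2))"
      by simp
    then show "Q2 (of_int (2 * l + r) + 2 * x) = Q2 (2 * (of_int l + (x + of_int r / 2)))"
      by (rule arg_cong)
  qed
  finally show ?thesis ..
qed

lemma Q2_periodized_add_half: "Q2_periodized x + Q2_periodized (x + 1/2) = 1"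
proof -
  define g where "g j = Q2 (of_int j + 2 * x)" for j :: int
  define evens where "evens = range (\<lambda>l::int. 2 * l + 0)"
  define odds where "odds = range (\<lambda>l::int. 2 * l + 1)"
  have g_sum: "(g has_sum 1) UNIV"
    unfolding g_def by (rule Q2_partition_of_unity)
  then have "g summable_on UNIV"
    unfolding summable_on_def by blast
  then have "g summable_on evens" "g summable_on odds"
    by (meson summable_on_subset_banach subset_UNIV)+
  moreover have "evens \<inter> odds = {}"
    unfolding evens_def odds_def by auto presburger
  moreover have "evens \<union> odds = UNIV"
    unfolding evens_def odds_def by (auto simp: image_iff) presburger
  ultimately have "infsum g UNIV = infsum g evens + infsum g odds"
    by (metis infsum_Un_disjoint)
  moreover have "infsum g evens = Q2_periodized x" "infsum g odds = Q2_periodized (x + 1/2)"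
    using Q2_periodized_shift_half[of x 0] Q2_periodized_shift_half[of x 1]
    unfolding evens_def odds_def g_def by simp_all
  ultimately show ?thesis
    using g_sum infsumI by metis
qed

lemma Q2_periodized_reflect: "Q2_periodized (- (x + 1/2)) = 1 - Q2_periodized x"
  using Q2_periodized_add_half[of x] Q2_periodized_minus[of "x + 1/2"] by linarith

lemma Xt_reflect:
  assumes "0 < m" "s \<le> 2 * m"
  shows "Xt m k (2 * m - s) n = - (Xt m k s (2 * int k + 1 - n) + 1/2)"
proof -
  have "real (2 * m - s) / (4 * real m) = 1/2 - real s / (4 * real m)"
    using assms by (simp add: of_nat_diff field_simps)
  moreover have "real_of_int (2 * int k + 1 - n) / (2 * real k + 1) = 1 - real_of_int n / (2 * real k + 1)"
    by (simp add: field_simps)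
  ultimately show ?thesis
    unfolding Xt_def by simp
qed

lemma Phit_reflect:
  assumes "0 < m" "s \<le> 2 * m"
  shows "Phit m k (2 * m - s) n = 1 - Phit m k s (2 * int k + 1 - n)"
  unfolding Phit_eq_Q2_periodized Xt_reflect[OF assms] by (rule Q2_periodized_reflect)

(* Row i of At m k is row s = i + 1 of the paper's matrix, so row 2m - 2 - i is row 2m - s. *)
lemma At_row_reflect:
  assumes "i < 2 * m - 1" "j < k"
  shows "At m k $$ (2 * m - 2 - i, j) = At m k $$ (i, j)"
proof -
  have "2 * m - 2 - i + 1 = 2 * m - (i + 1)" "0 < m" "i + 1 \<le> 2 * m"
    using assms by auto
  then show ?thesis
    using assms Phit_reflect[of m "i + 1" k] unfolding At_def by simp
qed

theorem lemma3p17: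
  fixes k m :: nat
  assumes "k > m"
    and "even k"
    and "(2 * real k + 1) / (4 * real m) < 1"
    and "gcd (4 * m) (2 * k + 1) = 1"
  shows "vec_space.rank (2 * m - 1) (At m k) \<le> k - 1"
proof -
  define p where "p i = min i (2 * m - 2 - i)" for i
  have "At m k \<in> carrier_mat (2 * m - 1) k"
    unfolding At_def by simp
  moreover have "p i < m" if "i < 2 * m - 1" for i
    using that unfolding p_def by linarith
  moreover have "At m k $$ (i, j) = At m k $$ (p i, j)" if "i < 2 * m - 1" "j < k" for i j
    using At_row_reflect[OF that] unfolding p_def by (simp add: min_def)
  ultimately have "vec_space.rank (2 * m - 1) (At m k) \<le> m"
    by (rule vec_space.rank_le_of_row_factor[where B = "\<lambda>i j. At m k $$ (i, j)"])
  then show ?thesis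
    using \<open>k > m\<close> by linarith
qed

end
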